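(* Let $2\le m\le n$. Then for every subgroup $H$ of $\mathrm{Sp}(n,1)$ which is conjugate in $\mathrm{Sp}(n,1)$ to $I_{n-m}\oplus\mathrm{SU}(m,1)$, the set of traces of the elements of $H$ is not contained in $\mathbb R$.
   Context: $\mathbb H$ denotes the quaternions. $\mathrm{Sp}(n,1)=\{A\in\mathrm{GL}(n+1,\mathbb H): A^*I_{n,1}A=I_{n,1}\}$ with $A^*$ the conjugate transpose and $I_{n,1}=\mathrm{diag}(1,\dots,1,-1)$. $\mathrm{SU}(m,1)$ is the group of complex $(m+1)\times(m+1)$ matrices of determinant $1$ preserving $I_{m,1}$. $I_{n-m}\oplus\mathrm{SU}(m,1)$ is the subgroup of block diagonal matrices with the $(n-m)\times(n-m)$ identity in the upper left block and an element of $\mathrm{SU}(m,1)$ in the lower right block. The trace of a quaternionic matrix is the sum of its diagonal entries. *)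

theory Defs
  imports Complex_Main "Jordan_Normal_Form.Matrix" "Jordan_Normal_Form.Determinant"
begin

datatype quat = Quat (qRe: real) (qI: real) (qJ: real) (qK: real)

lemma quat_eq_iff: "x = y \<longleftrightarrow> qRe x = qRe y \<and> qI x = qI y \<and> qJ x = qJ y \<and> qK x = qK y"
  by (cases x; cases y) auto

instantiation quat :: ring_1
begin
definition "0 = Quat 0 0 0 0"
definition "1 = Quat 1 0 0 0"
definition "x + y = Quat (qRe x + qRe y) (qI x + qI y) (qJ x + qJ y) (qK x + qK y)"
definition "x - y = Quat (qRe x - qRe y) (qI x - qI y) (qJ x - qJ y) (qK x - qK y)"
definition "- x = Quat (- qRe x) (- qI x) (- qJ x) (- qK x)"
definition "x * y = Quat
   (qRe x * qRe y - qI x * qI y - qJ x * qJ y - qK x * qK y)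
   (qRe x * qI y + qI x * qRe y + qJ x * qK y - qK x * qJ y)
   (qRe x * qJ y - qI x * qK y + qJ x * qRe y + qK x * qI y)
   (qRe x * qK y + qI x * qJ y - qJ x * qI y + qK x * qRe y)"
instance
  by standard (simp_all add: quat_eq_iff zero_quat_def one_quat_def plus_quat_def minus_quat_def
      uminus_quat_def times_quat_def algebra_simps)
end

definition qcnj :: "quat \<Rightarrow> quat" where
  "qcnj x = Quat (qRe x) (- qI x) (- qJ x) (- qK x)"

definition qreal :: "quat set" where
  "qreal = {x. qI x = 0 \<and> qJ x = 0 \<and> qK x = 0}"

definition quat_of_complex :: "complex \<Rightarrow> quat" where
  "quat_of_complex z = Quat (Re z) (Im z) 0 0"

definition qadjoint :: "quat mat \<Rightarrow> quat mat" where
  "qadjoint A = transpose_mat (map_mat qcnj A)"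

definition cadjoint :: "complex mat \<Rightarrow> complex mat" where
  "cadjoint A = transpose_mat (map_mat cnj A)"

definition qtrace :: "quat mat \<Rightarrow> quat" where
  "qtrace A = (\<Sum>i<dim_row A. A $$ (i, i))"

definition I_form :: "nat \<Rightarrow> 'a::ring_1 mat" where
  "I_form k = mat (k + 1) (k + 1) (\<lambda>(i, j). if i = j then (if i = k then -1 else 1) else 0)"

definition Sp :: "nat \<Rightarrow> quat mat set" where
  "Sp n = {A \<in> carrier_mat (n + 1) (n + 1).
             invertible_mat A \<and> qadjoint A * I_form n * A = I_form n}"

definition SU :: "nat \<Rightarrow> complex mat set" where
  "SU m = {B \<in> carrier_mat (m + 1) (m + 1).
             det B = 1 \<and> cadjoint B * I_form m * B = I_form m}"

definition block_embed :: "nat \<Rightarrow> nat \<Rightarrow> complex mat \<Rightarrow> quat mat" where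
  "block_embed n m B = four_block_mat (1\<^sub>m (n - m)) (0\<^sub>m (n - m) (m + 1))
                                      (0\<^sub>m (m + 1) (n - m)) (map_mat quat_of_complex B)"

definition ISU :: "nat \<Rightarrow> nat \<Rightarrow> quat mat set" where
  "ISU n m = block_embed n m ` SU m"

end

theory Submission
  imports Defs
begin

(* Write eps_i for the diagonal entries of I_{n,1}.  For g in Sp(n,1) the inverse is I_{n,1} g^* I_{n,1},
   so the trace of g D g^-1, with D diagonal, is sum_k eps_k sum_i eps_i g_ik d_k conj(g_ik).  For complex
   d_k its vector part is sum_k Im(d_k) eps_k T(g e_k) with T(v) = sum_i eps_i v_i i conj(v_i).  If all
   traces of g (I_{n-m} + SU(m,1)) g^-1 were real, the three elements diag(x, y, 1, ..., 1, w) of SU(m,1)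
   with {x, y, w} = {i, i, -1} would force T(g e_n) = 0.  Writing v_i = alpha_i + conj(gamma_i) j, the
   condition T(v) = 0 says that alpha and gamma are orthogonal and of equal norm for the complex Hermitian
   form of signature (n,1), while <v, v> = -1 for the last column v of g makes that norm negative.  Two
   orthogonal vectors of negative norm cannot exist in signature (n,1). *)

definition diagonal :: "nat \<Rightarrow> (nat \<Rightarrow> 'a::zero) \<Rightarrow> 'a mat" where
  "diagonal N d = mat N N (\<lambda>(i, j). if i = j then d i else 0)"

lemma diagonal_carrier [simp]: "diagonal N d \<in> carrier_mat N N"
  and dim_row_diagonal [simp]: "dim_row (diagonal N d) = N"
  and dim_col_diagonal [simp]: "dim_col (diagonal N d) = N"
  by (simp_all add: diagonal_def)

lemma index_diagonal [simp]:
  "i < N \<Longrightarrow> j < N \<Longrightarrow> diagonal N d $$ (i, j) = (if i = j then d i else 0)"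
  by (simp add: diagonal_def)

lemma diagonal_cong: "(\<And>k. k < N \<Longrightarrow> d k = e k) \<Longrightarrow> diagonal N d = diagonal N e"
  by (rule eq_matI) auto

lemma index_mult_diagonal_right:
  assumes "A \<in> carrier_mat r N" "i < r" "k < N"
  shows "(A * diagonal N d) $$ (i, k) = A $$ (i, k) * d k"
proof -
  have "(A * diagonal N d) $$ (i, k) = (\<Sum>j<N. A $$ (i, j) * (if j = k then d k else 0))"
    using assms by (auto simp: scalar_prod_def atLeast0LessThan intro!: sum.cong)
  also have "\<dots> = A $$ (i, k) * d k"
    using assms by (simp add: if_distrib[of "\<lambda>x. _ * x"] cong: if_cong)
  finally show ?thesis .
qed

lemma index_mult_diagonal_left:
  assumes "A \<in> carrier_mat N c" "k < N" "i < c"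
  shows "(diagonal N d * A) $$ (k, i) = d k * A $$ (k, i)"
proof -
  have "(diagonal N d * A) $$ (k, i) = (\<Sum>j<N. (if k = j then d k else 0) * A $$ (j, i))"
    using assms by (auto simp: scalar_prod_def atLeast0LessThan intro!: sum.cong)
  also have "\<dots> = d k * A $$ (k, i)"
    using assms by (simp add: if_distrib[of "\<lambda>x. x * _"] cong: if_cong)
  finally show ?thesis .
qed

lemma diagonal_mult_diagonal: "diagonal N d * diagonal N e = diagonal N (\<lambda>k. d k * e k)"
proof (rule eq_matI)
  fix i j assume "i < dim_row (diagonal N (\<lambda>k. d k * e k))" "j < dim_col (diagonal N (\<lambda>k. d k * e k))"
  then show "(diagonal N d * diagonal N e) $$ (i, j) = diagonal N (\<lambda>k. d k * e k) $$ (i, j)"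
    by (subst index_mult_diagonal_right[of _ N]) auto
qed auto

lemma det_diagonal: "det (diagonal N d) = (\<Prod>k<N. d k)"
  by (subst det_upper_triangular[of _ N])
    (auto simp: upper_triangular_def prod_list_diag_prod atLeast0LessThan)

lemma cadjoint_diagonal: "cadjoint (diagonal N c) = diagonal N (\<lambda>k. cnj (c k))"
  by (rule eq_matI) (auto simp: cadjoint_def)

definition form_sign :: "nat \<Rightarrow> nat \<Rightarrow> 'a::ring_1" where
  "form_sign n k = (if k = n then -1 else 1)"

lemma I_form_diagonal: "I_form n = diagonal (n + 1) (form_sign n)"
  by (rule eq_matI) (auto simp: I_form_def form_sign_def)

lemma form_sign_square [simp]: "form_sign n k * form_sign n k = 1"
  by (simp add: form_sign_def)

lemma diagonal_in_SU:
  assumes "\<And>k. k < m + 1 \<Longrightarrow> cnj (c k) * c k = 1" and "(\<Prod>k<m + 1. c k) = 1"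
  shows "diagonal (m + 1) c \<in> SU m"
proof -
  have "cadjoint (diagonal (m + 1) c) * I_form m * diagonal (m + 1) c
      = diagonal (m + 1) (\<lambda>k. cnj (c k) * form_sign m k * c k)"
    by (simp add: cadjoint_diagonal I_form_diagonal diagonal_mult_diagonal)
  also have "\<dots> = I_form m"
    unfolding I_form_diagonal by (rule diagonal_cong) (use assms(1) in \<open>auto simp: form_sign_def\<close>)
  finally show ?thesis
    using assms(2) by (simp add: SU_def det_diagonal)
qed

lemma block_embed_diagonal:
  assumes "m \<le> n"
  shows "block_embed n m (diagonal (m + 1) c)
       = diagonal (n + 1) (\<lambda>k. quat_of_complex (if k < n - m then 1 else c (k - (n - m))))"
  by (rule eq_matI)
    (use assms in \<open>auto simp: block_embed_def quat_of_complex_def zero_quat_def one_quat_def\<close>)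

(* For q = 1 this is the form <v, v> preserved by Sp(n,1); for q = i it is the map T of the header. *)
definition form_twist :: "nat \<Rightarrow> quat \<Rightarrow> (nat \<Rightarrow> quat) \<Rightarrow> quat" where
  "form_twist n q v = (\<Sum>i<n + 1. form_sign n i * (v i * q * qcnj (v i)))"

lemma mult_qcnj_commute: "x * qcnj x = qcnj x * x"
  by (cases x) (simp add: qcnj_def times_quat_def algebra_simps)

lemma Sp_inverse_entry:
  assumes g: "g \<in> Sp n" and g': "g' \<in> carrier_mat (n + 1) (n + 1)" and inv: "g * g' = 1\<^sub>m (n + 1)"
    and k: "k < n + 1" and i: "i < n + 1"
  shows "g' $$ (k, i) = form_sign n k * qcnj (g $$ (i, k)) * form_sign n i"
proof -
  have gc: "g \<in> carrier_mat (n + 1) (n + 1)" and form: "qadjoint g * I_form n * g = I_form n"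
    using g by (auto simp: Sp_def)
  have ac: "qadjoint g \<in> carrier_mat (n + 1) (n + 1)"
    using gc by (auto simp: qadjoint_def)
  have Ic: "I_form n \<in> carrier_mat (n + 1) (n + 1)"
    by (simp add: I_form_diagonal)
  have AI: "qadjoint g * I_form n \<in> carrier_mat (n + 1) (n + 1)"
    using ac Ic by (rule mult_carrier_mat)
  have II: "I_form n * I_form n = (1\<^sub>m (n + 1) :: quat mat)"
    unfolding I_form_diagonal diagonal_mult_diagonal by (rule eq_matI) auto
  have "qadjoint g * I_form n = (qadjoint g * I_form n * g) * g'"
    using assoc_mult_mat[OF AI gc g'] inv right_mult_one_mat[OF AI] by simp
  then have "qadjoint g * I_form n = I_form n * g'"
    using form by simp
  then have "g' = I_form n * (qadjoint g * I_form n)"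
    using assoc_mult_mat[OF Ic Ic g'] II g' by simp
  then have "g' $$ (k, i) = (I_form n * (qadjoint g * I_form n)) $$ (k, i)"
    by simp
  also have "\<dots> = form_sign n k * ((qadjoint g * I_form n) $$ (k, i))"
    unfolding I_form_diagonal using ac k i by (subst index_mult_diagonal_left[of _ "n + 1" "n + 1"]) auto
  also have "\<dots> = form_sign n k * (qadjoint g $$ (k, i) * form_sign n i)"
    unfolding I_form_diagonal using ac k i by (subst index_mult_diagonal_right[of _ "n + 1"]) auto
  finally show ?thesis
    using gc k i by (simp add: qadjoint_def mult.assoc)
qed

lemma Sp_column_form:
  assumes g: "g \<in> Sp n" and k: "k < n + 1"
  shows "form_twist n 1 (\<lambda>i. g $$ (i, k)) = form_sign n k"
proof -
  have gc: "g \<in> carrier_mat (n + 1) (n + 1)" and form: "qadjoint g * I_form n * g = I_form n"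
    using g by (auto simp: Sp_def)
  have ac: "qadjoint g \<in> carrier_mat (n + 1) (n + 1)"
    using gc by (auto simp: qadjoint_def)
  have "form_sign n k = (qadjoint g * I_form n * g) $$ (k, k)"
    using form k by (simp add: I_form_diagonal)
  also have "\<dots> = (\<Sum>i<n + 1. (qadjoint g * I_form n) $$ (k, i) * g $$ (i, k))"
    using k gc ac by (auto simp: scalar_prod_def atLeast0LessThan I_form_diagonal intro!: sum.cong)
  also have "\<dots> = (\<Sum>i<n + 1. qcnj (g $$ (i, k)) * form_sign n i * g $$ (i, k))"
    by (rule sum.cong) (use ac gc k in \<open>auto simp del: index_mult_mat
        simp: I_form_diagonal index_mult_diagonal_right qadjoint_def\<close>)
  also have "\<dots> = form_twist n 1 (\<lambda>i. g $$ (i, k))"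
    unfolding form_twist_def
    by (intro sum.cong refl) (simp add: form_sign_def mult_qcnj_commute)
  finally show ?thesis ..
qed

lemma qtrace_Sp_conj_diagonal:
  assumes g: "g \<in> Sp n" and g': "g' \<in> carrier_mat (n + 1) (n + 1)" and inv: "g * g' = 1\<^sub>m (n + 1)"
  shows "qtrace (g * diagonal (n + 1) d * g')
       = (\<Sum>k<n + 1. form_sign n k * form_twist n (d k) (\<lambda>i. g $$ (i, k)))"
proof -
  have gc: "g \<in> carrier_mat (n + 1) (n + 1)"
    using g by (simp add: Sp_def)
  have "(g * diagonal (n + 1) d * g') $$ (i, i)
      = (\<Sum>k<n + 1. form_sign n k * (form_sign n i * (g $$ (i, k) * d k * qcnj (g $$ (i, k)))))"
    if i: "i < n + 1" for i
  proof -
    have "(g * diagonal (n + 1) d * g') $$ (i, i)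
        = (\<Sum>k<n + 1. (g * diagonal (n + 1) d) $$ (i, k) * g' $$ (k, i))"
      using i gc g' by (auto simp: scalar_prod_def atLeast0LessThan intro!: sum.cong)
    also have "\<dots> = (\<Sum>k<n + 1. g $$ (i, k) * d k * g' $$ (k, i))"
      by (intro sum.cong refl) (simp only: lessThan_iff index_mult_diagonal_right[OF gc i])
    also have "\<dots> = (\<Sum>k<n + 1. form_sign n k * (form_sign n i * (g $$ (i, k) * d k * qcnj (g $$ (i, k)))))"
    proof (intro sum.cong refl)
      fix k assume "k \<in> {..<n + 1}"
      then have "g' $$ (k, i) = form_sign n k * qcnj (g $$ (i, k)) * form_sign n i"
        using Sp_inverse_entry[OF g g' inv _ i] by simp
      then show "g $$ (i, k) * d k * g' $$ (k, i)
          = form_sign n k * (form_sign n i * (g $$ (i, k) * d k * qcnj (g $$ (i, k))))"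
        by (simp add: form_sign_def)
    qed
    finally show ?thesis .
  qed
  then have "qtrace (g * diagonal (n + 1) d * g')
      = (\<Sum>i<n + 1. \<Sum>k<n + 1. form_sign n k * (form_sign n i * (g $$ (i, k) * d k * qcnj (g $$ (i, k)))))"
    using gc by (simp add: qtrace_def)
  also have "\<dots> = (\<Sum>k<n + 1. form_sign n k * form_twist n (d k) (\<lambda>i. g $$ (i, k)))"
    by (subst sum.swap) (simp add: form_twist_def sum_distrib_left del: sum.lessThan_Suc)
  finally show ?thesis .
qed

lemma quat_components_sum:
  "qRe (sum f A) = (\<Sum>a\<in>A. qRe (f a))" "qI (sum f A) = (\<Sum>a\<in>A. qI (f a))"
  "qJ (sum f A) = (\<Sum>a\<in>A. qJ (f a))" "qK (sum f A) = (\<Sum>a\<in>A. qK (f a))"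
  by (simp_all add: sum_comp_morphism[symmetric, where h = qRe] sum_comp_morphism[symmetric, where h = qI]
      sum_comp_morphism[symmetric, where h = qJ] sum_comp_morphism[symmetric, where h = qK]
      zero_quat_def plus_quat_def comp_def)

lemma form_sign_quat: "(form_sign n k :: quat) = Quat (form_sign n k) 0 0 0"
  by (simp add: form_sign_def one_quat_def uminus_quat_def)

lemma quat_of_complex_0 [simp]: "quat_of_complex 0 = 0"
  by (simp add: quat_of_complex_def zero_quat_def)

lemma quat_double_eq_0_iff: "x + x = 0 \<longleftrightarrow> x = (0 :: quat)"
  by (cases x) (auto simp: plus_quat_def zero_quat_def)

definition qvec :: "quat \<Rightarrow> quat" where
  "qvec x = Quat 0 (qI x) (qJ x) (qK x)"

lemma qvec_eq_0_iff: "qvec x = 0 \<longleftrightarrow> x \<in> qreal"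
  by (simp add: qvec_def qreal_def zero_quat_def)

lemma qvec_sum: "qvec (sum f A) = (\<Sum>a\<in>A. qvec (f a))"
  by (rule sum_comp_morphism[symmetric, unfolded comp_def])
    (simp_all add: qvec_def zero_quat_def plus_quat_def)

lemma qvec_form_sign_mult: "qvec (form_sign n k * x) = form_sign n k * qvec x"
  by (simp add: qvec_def form_sign_quat times_quat_def)

lemma qvec_conj_complex:
  "qvec (v * quat_of_complex z * qcnj v) = v * quat_of_complex (\<i> * of_real (Im z)) * qcnj v"
  by (cases v) (simp add: qvec_def quat_of_complex_def qcnj_def times_quat_def algebra_simps)

lemma Re_form_sign [simp]: "Re (form_sign n k) = form_sign n k"
  and Im_form_sign [simp]: "Im (form_sign n k) = 0"
  by (simp_all add: form_sign_def)

definition hermitian_form :: "nat \<Rightarrow> (nat \<Rightarrow> complex) \<Rightarrow> (nat \<Rightarrow> complex) \<Rightarrow> complex" where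
  "hermitian_form n \<alpha> \<beta> = (\<Sum>i<n + 1. form_sign n i * (\<alpha> i * cnj (\<beta> i)))"

lemma hermitian_form_split:
  "hermitian_form n \<alpha> \<beta> = (\<Sum>i<n. \<alpha> i * cnj (\<beta> i)) - \<alpha> n * cnj (\<beta> n)"
  by (simp add: hermitian_form_def form_sign_def)

lemma hermitian_form_negative_not_orthogonal:
  assumes neg: "Re (hermitian_form n \<alpha> \<alpha>) < 0" "Re (hermitian_form n \<gamma> \<gamma>) < 0"
  shows "hermitian_form n \<alpha> \<gamma> \<noteq> 0"
proof
  assume orth: "hermitian_form n \<alpha> \<gamma> = 0"
  define A where "A = hermitian_form n \<alpha> \<alpha>"
  define G where "G = hermitian_form n \<gamma> \<gamma>"
  \<comment> \<open>w lies in the positive definite part C^n of the form\<close>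
  define w where "w i = \<gamma> n * \<alpha> i - \<alpha> n * \<gamma> i" for i
  have X: "(\<Sum>i<n. \<alpha> i * cnj (\<gamma> i)) = \<alpha> n * cnj (\<gamma> n)"
    using orth by (simp add: hermitian_form_split)
  have X': "(\<Sum>i<n. \<gamma> i * cnj (\<alpha> i)) = \<gamma> n * cnj (\<alpha> n)"
    using arg_cong[OF X, of cnj] by (simp add: mult.commute)
  have "(\<Sum>i<n. w i * cnj (w i)) = \<gamma> n * cnj (\<gamma> n) * (\<Sum>i<n. \<alpha> i * cnj (\<alpha> i))
      - \<gamma> n * cnj (\<alpha> n) * (\<Sum>i<n. \<alpha> i * cnj (\<gamma> i))
      - \<alpha> n * cnj (\<gamma> n) * (\<Sum>i<n. \<gamma> i * cnj (\<alpha> i))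
      + \<alpha> n * cnj (\<alpha> n) * (\<Sum>i<n. \<gamma> i * cnj (\<gamma> i))"
    by (simp add: w_def sum_distrib_left sum_subtractf sum.distrib[symmetric] algebra_simps)
  also have "\<dots> = \<gamma> n * cnj (\<gamma> n) * A + \<alpha> n * cnj (\<alpha> n) * G"
    unfolding X X' A_def G_def hermitian_form_split by (simp add: algebra_simps)
  finally have S: "(\<Sum>i<n. w i * cnj (w i)) = \<gamma> n * cnj (\<gamma> n) * A + \<alpha> n * cnj (\<alpha> n) * G" .
  have "(\<Sum>i<n. (cmod (w i))\<^sup>2) = Re (\<Sum>i<n. w i * cnj (w i))"
    by (simp add: complex_norm_square[symmetric] Re_sum)
  also have "\<dots> = (cmod (\<gamma> n))\<^sup>2 * Re A + (cmod (\<alpha> n))\<^sup>2 * Re G"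
    unfolding S by (simp add: complex_norm_square[symmetric] flip: of_real_power)
  finally have w_norm: "(\<Sum>i<n. (cmod (w i))\<^sup>2) = (cmod (\<gamma> n))\<^sup>2 * Re A + (cmod (\<alpha> n))\<^sup>2 * Re G" .
  have "Re A + (cmod (\<alpha> n))\<^sup>2 = (\<Sum>i<n. (cmod (\<alpha> i))\<^sup>2)"
    by (simp add: A_def hermitian_form_split complex_norm_square[symmetric] Re_sum)
  moreover have "0 \<le> (\<Sum>i<n. (cmod (\<alpha> i))\<^sup>2)"
    by (simp add: sum_nonneg)
  ultimately have "0 < (cmod (\<alpha> n))\<^sup>2"
    using neg(1) unfolding A_def by linarith
  then have "(cmod (\<alpha> n))\<^sup>2 * Re G < 0"
    using neg(2) unfolding G_def by (rule mult_pos_neg)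
  moreover have "(cmod (\<gamma> n))\<^sup>2 * Re A \<le> 0"
    using neg(1) unfolding A_def by (simp add: mult_nonneg_nonpos)
  moreover have "0 \<le> (\<Sum>i<n. (cmod (w i))\<^sup>2)"
    by (simp add: sum_nonneg)
  ultimately show False
    using w_norm by linarith
qed

lemma form_twist_0 [simp]: "form_twist n 0 v = 0"
  by (simp add: form_twist_def)

lemma qvec_form_twist:
  "qvec (form_twist n (quat_of_complex z) v) = form_twist n (quat_of_complex (\<i> * of_real (Im z))) v"
  by (simp add: form_twist_def qvec_sum qvec_form_sign_mult qvec_conj_complex del: sum.lessThan_Suc)

lemma form_twist_i_eq_0_imp_form_nonneg:
  assumes "form_twist n (quat_of_complex \<i>) v = 0"
  shows "0 \<le> qRe (form_twist n 1 v)"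
proof -
  \<comment> \<open>v i = \<alpha> i + cnj (\<gamma> i) * j\<close>
  define \<alpha> where "\<alpha> i = Complex (qRe (v i)) (qI (v i))" for i
  define \<gamma> where "\<gamma> i = Complex (qJ (v i)) (- qK (v i))" for i
  have norm: "qRe (form_twist n 1 v) = Re (hermitian_form n \<alpha> \<alpha>) + Re (hermitian_form n \<gamma> \<gamma>)"
    by (simp add: form_twist_def hermitian_form_def quat_components_sum Re_sum form_sign_quat
        times_quat_def qcnj_def one_quat_def \<alpha>_def \<gamma>_def algebra_simps power2_eq_square
        flip: sum.distrib del: sum.lessThan_Suc)
  have "form_twist n (quat_of_complex \<i>) v = Quat 0
      (Re (hermitian_form n \<alpha> \<alpha>) - Re (hermitian_form n \<gamma> \<gamma>))
      (2 * Im (hermitian_form n \<alpha> \<gamma>)) (- 2 * Re (hermitian_form n \<alpha> \<gamma>))"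
    by (simp add: quat_eq_iff form_twist_def hermitian_form_def quat_components_sum Re_sum Im_sum
        form_sign_quat times_quat_def qcnj_def quat_of_complex_def \<alpha>_def \<gamma>_def algebra_simps
        sum_distrib_left power2_eq_square flip: sum_subtractf del: sum.lessThan_Suc)
  then have "Re (hermitian_form n \<alpha> \<alpha>) = Re (hermitian_form n \<gamma> \<gamma>)" "hermitian_form n \<alpha> \<gamma> = 0"
    using assms by (simp_all add: quat_eq_iff zero_quat_def complex_eq_iff)
  then show ?thesis
    using hermitian_form_negative_not_orthogonal[of n \<alpha> \<gamma>] norm by fastforce
qed

definition probe :: "nat \<Rightarrow> complex \<Rightarrow> complex \<Rightarrow> complex \<Rightarrow> nat \<Rightarrow> complex" where
  "probe m x y w j = (if j = 0 then x else if j = 1 then y else if j = m then w else 1)"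

lemma probe_in_SU:
  assumes "2 \<le> m" "x * y * w = 1" "cnj x * x = 1" "cnj y * y = 1" "cnj w * w = 1"
  shows "diagonal (m + 1) (probe m x y w) \<in> SU m"
proof (rule diagonal_in_SU)
  have "(\<Prod>k<m + 1. probe m x y w k) = (\<Prod>k\<in>{0, 1, m}. probe m x y w k)"
    by (rule prod.mono_neutral_right) (use assms(1) in \<open>auto simp: probe_def\<close>)
  also have "\<dots> = x * y * w"
    using assms(1) by (simp add: probe_def)
  finally show "(\<Prod>k<m + 1. probe m x y w k) = 1"
    using assms(2) by simp
qed (use assms in \<open>auto simp: probe_def\<close>)

lemma qvec_qtrace_Sp_conj_probe:
  assumes g: "g \<in> Sp n" and g': "g' \<in> carrier_mat (n + 1) (n + 1)" and inv: "g * g' = 1\<^sub>m (n + 1)"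
    and mn: "2 \<le> m" "m \<le> n"
  shows "qvec (qtrace (g * block_embed n m (diagonal (m + 1) (probe m x y w)) * g'))
       = form_twist n (quat_of_complex (\<i> * of_real (Im x))) (\<lambda>i. g $$ (i, n - m))
       + form_twist n (quat_of_complex (\<i> * of_real (Im y))) (\<lambda>i. g $$ (i, n - m + 1))
       - form_twist n (quat_of_complex (\<i> * of_real (Im w))) (\<lambda>i. g $$ (i, n))"
proof -
  have index: "n - m \<noteq> n" "n - m + 1 \<noteq> n" "\<not> n < n - m" "n - (n - m) = m" "m \<noteq> 0" "m \<noteq> 1"
    using mn by auto
  define z where "z k = (if k < n - m then 1 else probe m x y w (k - (n - m)))" for k
  define t where "t k = form_twist n (quat_of_complex (\<i> * of_real (Im (z k)))) (\<lambda>i. g $$ (i, k))" for k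
  have "qvec (qtrace (g * block_embed n m (diagonal (m + 1) (probe m x y w)) * g'))
      = (\<Sum>k<n + 1. form_sign n k * t k)"
    unfolding block_embed_diagonal[OF mn(2)] qtrace_Sp_conj_diagonal[OF g g' inv]
    by (simp only: qvec_sum qvec_form_sign_mult qvec_form_twist t_def z_def)
  also have "\<dots> = (\<Sum>k\<in>{n - m, n - m + 1, n}. form_sign n k * t k)"
    by (rule sum.mono_neutral_right) (use mn in \<open>auto simp: t_def z_def probe_def\<close>)
  also have "\<dots> = t (n - m) + t (n - m + 1) - t n"
    using index by (simp add: form_sign_def)
  finally show ?thesis
    using index by (simp add: t_def z_def probe_def)
qed

lemma Sp_conj_real_traces_imp_last_twist_0:
  assumes g: "g \<in> Sp n" and g': "g' \<in> carrier_mat (n + 1) (n + 1)" and inv: "g * g' = 1\<^sub>m (n + 1)"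
    and mn: "2 \<le> m" "m \<le> n"
    and real: "\<And>B. B \<in> SU m \<Longrightarrow> qtrace (g * block_embed n m B * g') \<in> qreal"
  shows "form_twist n (quat_of_complex \<i>) (\<lambda>i. g $$ (i, n)) = 0"
proof -
  define t where "t k = form_twist n (quat_of_complex \<i>) (\<lambda>i. g $$ (i, k))" for k
  have probe_real: "form_twist n (quat_of_complex (\<i> * of_real (Im x))) (\<lambda>i. g $$ (i, n - m))
      + form_twist n (quat_of_complex (\<i> * of_real (Im y))) (\<lambda>i. g $$ (i, n - m + 1))
      - form_twist n (quat_of_complex (\<i> * of_real (Im w))) (\<lambda>i. g $$ (i, n)) = 0"
    if "x * y * w = 1" "cnj x * x = 1" "cnj y * y = 1" "cnj w * w = 1" for x y w
    using real[OF probe_in_SU[OF mn(1) that]]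
    unfolding qvec_eq_0_iff[symmetric] qvec_qtrace_Sp_conj_probe[OF g g' inv mn] .
  have "t (n - m) + t (n - m + 1) = 0" "t (n - m) - t n = 0" "t (n - m + 1) - t n = 0"
    using probe_real[of \<i> \<i> "-1"] probe_real[of \<i> "-1" \<i>] probe_real[of "-1" \<i> \<i>]
    by (simp_all add: t_def)
  then have "t n + t n = 0"
    by (metis right_minus_eq)
  then show ?thesis
    unfolding t_def quat_double_eq_0_iff .
qed

theorem corollary4p13:
  fixes m n :: nat and H :: "quat mat set"
  assumes "2 \<le> m" and "m \<le> n"
    and "\<exists>g \<in> Sp n. \<exists>g' \<in> carrier_mat (n + 1) (n + 1).
           g * g' = 1\<^sub>m (n + 1) \<and> g' * g = 1\<^sub>m (n + 1) \<and>
           H = (\<lambda>X. g * X * g') ` ISU n m"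
  shows "\<not> (qtrace ` H \<subseteq> qreal)"
proof
  assume real: "qtrace ` H \<subseteq> qreal"
  obtain g g' where g: "g \<in> Sp n" and g': "g' \<in> carrier_mat (n + 1) (n + 1)"
    and inv: "g * g' = 1\<^sub>m (n + 1)" and H: "H = (\<lambda>X. g * X * g') ` ISU n m"
    using assms(3) by blast
  have "form_twist n (quat_of_complex \<i>) (\<lambda>i. g $$ (i, n)) = 0"
  proof (rule Sp_conj_real_traces_imp_last_twist_0[OF g g' inv assms(1,2)])
    fix B assume "B \<in> SU m"
    then show "qtrace (g * block_embed n m B * g') \<in> qreal"
      using real unfolding H ISU_def by blast
  qed
  then have "0 \<le> qRe (form_twist n 1 (\<lambda>i. g $$ (i, n)))"
    by (rule form_twist_i_eq_0_imp_form_nonneg)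
  moreover have "form_twist n 1 (\<lambda>i. g $$ (i, n)) = form_sign n n"
    using Sp_column_form[OF g] by simp
  ultimately show False
    by (simp add: form_sign_def one_quat_def uminus_quat_def)
qed

end
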